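(* In the setting of the cascaded network $\mathrm{GradNetC}$ (defined by $\boldsymbol{z}_0=\boldsymbol{\beta}_0\odot\boldsymbol{W}\boldsymbol{x}+\boldsymbol{b}_0$, $\boldsymbol{z}_\ell=\boldsymbol{\beta}_\ell\odot\boldsymbol{W}\boldsymbol{x}+\boldsymbol{\alpha}_\ell\odot\sigma_\ell(\boldsymbol{z}_{\ell-1})+\boldsymbol{b}_\ell$ for $1\le\ell\le L-1$, and $\mathrm{GradNetC}(\boldsymbol{x})=\boldsymbol{W}^\top[\boldsymbol{\alpha}_L\odot\sigma_L(\boldsymbol{z}_{L-1})]+\boldsymbol{b}_L$, with $\boldsymbol{W}\in\mathbb{R}^{n\times d}$, $\boldsymbol{\alpha}_\ell,\boldsymbol{\beta}_\ell,\boldsymbol{b}_\ell\in\mathbb{R}^n$, $\boldsymbol{b}_L\in\mathbb{R}^d$), suppose that all $\boldsymbol{\alpha}_\ell$ ($1\le\ell\le L$) and $\boldsymbol{\beta}_\ell$ ($0\le\ell\le L-1$) have nonnegative entries and each $\sigma_\ell$ is a differentiable, monotonically increasing elementwise activation. Then $\mathrm{GradNetC}$ is the gradient of a convex continuously differentiable function on $\mathbb{R}^d$, i.e. an mGradNet.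
   Context: $\odot$ is the entrywise product. An elementwise activation $\sigma:\mathbb{R}^n\to\mathbb{R}^n$ has the form $\sigma(\boldsymbol{z})=(s_1(z_1),\dots,s_n(z_n))$; it is monotonically increasing if each $s_j$ is. An mGradNet is a function $f:\mathbb{R}^d\to\mathbb{R}^d$ with $f=\nabla F$ for some convex continuously differentiable $F:\mathbb{R}^d\to\mathbb{R}$. *)

theory Defs
  imports "HOL-Analysis.Analysis"
begin

definition hadamard :: "real^'n \<Rightarrow> real^'n \<Rightarrow> real^'n" (infixl "\<odot>" 70) where
  "u \<odot> v = (\<chi> j. u $ j * v $ j)"

definition elementwise :: "('n \<Rightarrow> real \<Rightarrow> real) \<Rightarrow> real^'n \<Rightarrow> real^'n" where
  "elementwise s z = (\<chi> j. s j (z $ j))"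

text \<open>Hidden states z_l of the cascaded network GradNetC.
  sig l j is the j-th scalar component of the activation sigma_l.\<close>
fun gradnetC_z ::
  "real^'d^'n \<Rightarrow> (nat \<Rightarrow> real^'n) \<Rightarrow> (nat \<Rightarrow> real^'n) \<Rightarrow> (nat \<Rightarrow> real^'n)
   \<Rightarrow> (nat \<Rightarrow> 'n \<Rightarrow> real \<Rightarrow> real) \<Rightarrow> real^'d \<Rightarrow> nat \<Rightarrow> real^'n" where
  "gradnetC_z W alpha beta b sig x 0 = beta 0 \<odot> (W *v x) + b 0"
| "gradnetC_z W alpha beta b sig x (Suc l) =
     beta (Suc l) \<odot> (W *v x)
     + alpha (Suc l) \<odot> elementwise (sig (Suc l)) (gradnetC_z W alpha beta b sig x l)
     + b (Suc l)"

definition gradnetC ::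
  "nat \<Rightarrow> real^'d^'n \<Rightarrow> (nat \<Rightarrow> real^'n) \<Rightarrow> (nat \<Rightarrow> real^'n) \<Rightarrow> (nat \<Rightarrow> real^'n)
   \<Rightarrow> real^'d \<Rightarrow> (nat \<Rightarrow> 'n \<Rightarrow> real \<Rightarrow> real) \<Rightarrow> real^'d \<Rightarrow> real^'d" where
  "gradnetC L W alpha beta b bL sig x =
     transpose W *v (alpha L \<odot> elementwise (sig L) (gradnetC_z W alpha beta b sig x (L - 1))) + bL"

text \<open>mGradNet: f is the gradient of a convex continuously differentiable F.
  F has Frechet derivative h \<mapsto> f x \<bullet> h at each x; continuity of this
  derivative in x is continuity of f.\<close>
definition mGradNet :: "('a::euclidean_space \<Rightarrow> 'a) \<Rightarrow> bool" where
  "mGradNet f \<longleftrightarrow> (\<exists>F :: 'a \<Rightarrow> real. convex_on UNIV F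
      \<and> (\<forall>x. (F has_derivative (\<lambda>h. f x \<bullet> h)) (at x))
      \<and> continuous_on UNIV f)"

end

theory Submission
  imports Defs
begin

text \<open>Every layer acts entrywise, so coordinate j of each hidden state depends on x only through
  the scalar w_j \<bullet> x, where w_j is the j-th row of W. Hence GradNetC has the ridge form
  x \<mapsto> W^T (h_j (w_j \<bullet> x))_j + b_L, where each h_j is built from the scalar activations by
  composition and nonnegative linear combination and is therefore continuous and nondecreasing.
  An antiderivative H_j of h_j is then convex, and F x = (\<Sum>j. H_j (w_j \<bullet> x)) + b_L \<bullet> x is a convex
  C^1 potential with gradient GradNetC.\<close>

lemma convex_on_linear_compose:
  assumes "convex_on UNIV f" "linear g"
  shows "convex_on UNIV (\<lambda>x. f (g x))"
proof (rule convex_onI)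
  fix t :: real and x y assume "0 < t" "t < 1"
  then show "f (g ((1 - t) *\<^sub>R x + t *\<^sub>R y)) \<le> (1 - t) * f (g x) + t * f (g y)"
    using convex_onD[OF assms(1), of t "g x" "g y"]
    by (simp add: linear_add[OF assms(2)] linear_scale[OF assms(2)])
qed simp

lemma convex_on_sum_fun:
  assumes "convex S" "\<And>i. i \<in> I \<Longrightarrow> convex_on S (f i)"
  shows "convex_on S (\<lambda>x. \<Sum>i\<in>I. f i x)"
proof (cases "finite I")
  case True
  then show ?thesis using assms(2)
    by (induction I rule: finite_induct) (auto simp: convex_on_const assms(1))
qed (simp add: convex_on_const assms(1))

lemma continuous_mono_antiderivative_convex:
  fixes h :: "real \<Rightarrow> real"
  assumes "continuous_on UNIV h" "mono h"
  shows "\<exists>H. (\<forall>t. (H has_real_derivative h t) (at t)) \<and> convex_on UNIV H"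
proof -
  have "\<exists>H. \<forall>t. -\<infinity> < ereal t \<longrightarrow> ereal t < \<infinity> \<longrightarrow> (H has_vector_derivative h t) (at t)"
    by (rule einterval_antiderivative)
      (use assms(1) in \<open>auto simp: continuous_on_eq_continuous_at\<close>)
  then obtain H where H: "\<And>t. (H has_real_derivative h t) (at t)"
    by (auto simp: has_real_derivative_iff_has_vector_derivative)
  moreover have "convex_on UNIV H"
    by (rule convex_on_realI[where f'=h]) (use H assms(2) in \<open>auto dest: monoD\<close>)
  ultimately show ?thesis by blast
qed

lemma has_derivative_ridge_sum:
  fixes W :: "real^'d^'n" and c :: "real^'d"
  assumes "\<And>j t. (H j has_real_derivative h j t) (at t)"
  shows "((\<lambda>x. (\<Sum>j\<in>UNIV. H j (W $ j \<bullet> x)) + c \<bullet> x) has_derivative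
          (\<lambda>v. (transpose W *v (\<chi> j. h j (W $ j \<bullet> x)) + c) \<bullet> v)) (at x)"
proof -
  have "((\<lambda>x. (\<Sum>j\<in>UNIV. H j (W $ j \<bullet> x)) + c \<bullet> x) has_derivative
          (\<lambda>v. (\<Sum>j\<in>UNIV. h j (W $ j \<bullet> x) * (W $ j \<bullet> v)) + c \<bullet> v)) (at x)"
    by (intro derivative_intros has_derivative_compose[where g="H _",
          OF bounded_linear_imp_has_derivative[OF bounded_linear_inner_right]
             has_field_derivative_imp_has_derivative[OF assms]])
  moreover have "(\<Sum>j\<in>UNIV. h j (W $ j \<bullet> x) * (W $ j \<bullet> v)) = (\<chi> j. h j (W $ j \<bullet> x)) \<bullet> (W *v v)"
    for v
    by (simp add: inner_vec_def matrix_vector_mul_component)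
  ultimately show ?thesis
    by (simp add: inner_add_left dot_lmul_matrix)
qed

lemma mGradNet_ridge:
  fixes W :: "real^'d^'n" and c :: "real^'d"
  assumes "\<And>j. continuous_on UNIV (h j)" "\<And>j. mono (h j)"
  shows "mGradNet (\<lambda>x. transpose W *v (\<chi> j. h j (W $ j \<bullet> x)) + c)"
proof -
  have "\<forall>j. \<exists>H. (\<forall>t. (H has_real_derivative h j t) (at t)) \<and> convex_on UNIV H"
    using continuous_mono_antiderivative_convex[OF assms] by blast
  then obtain H where H: "\<And>j t. (H j has_real_derivative h j t) (at t)"
    and H_convex: "\<And>j. convex_on UNIV (H j)"
    by metis
  have linear_inner: "linear (\<lambda>x. u \<bullet> x)" for u :: "real^'d"
    by (rule bounded_linear_inner_right[THEN bounded_linear.linear])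
  have "convex_on UNIV (\<lambda>x. H j (W $ j \<bullet> x))" for j
    by (rule convex_on_linear_compose[OF H_convex linear_inner])
  then have "convex_on UNIV (\<lambda>x. \<Sum>j\<in>UNIV. H j (W $ j \<bullet> x))"
    by (rule convex_on_sum_fun[OF convex_UNIV])
  moreover have "convex_on UNIV (\<lambda>x. c \<bullet> x)"
    by (rule convex_on_linear_compose[OF _ linear_inner]) (simp add: convex_on_ident)
  ultimately have "convex_on UNIV (\<lambda>x. (\<Sum>j\<in>UNIV. H j (W $ j \<bullet> x)) + c \<bullet> x)"
    by (rule convex_on_add)
  moreover have "continuous_on UNIV (\<lambda>x. transpose W *v (\<chi> j. h j (W $ j \<bullet> x)) + c)"
  proof -
    have "continuous_on UNIV (\<lambda>x. h j (W $ j \<bullet> x))" for j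
      by (rule continuous_on_compose2[OF assms(1)]) (auto intro: continuous_intros)
    then have "continuous_on UNIV (\<lambda>x. \<chi> j. h j (W $ j \<bullet> x))"
      by (rule continuous_on_vec_lambda)
    then have "continuous_on UNIV (\<lambda>x. transpose W *v (\<chi> j. h j (W $ j \<bullet> x)))"
      by (rule continuous_on_compose2[OF matrix_vector_mult_linear_continuous_on]) auto
    then show ?thesis
      by (rule continuous_on_add[OF _ continuous_on_const])
  qed
  ultimately show ?thesis
    unfolding mGradNet_def using has_derivative_ridge_sum[OF H] by (intro exI conjI allI)
qed

fun gradnetC_scalar :: "(nat \<Rightarrow> real^'n) \<Rightarrow> (nat \<Rightarrow> real^'n) \<Rightarrow> (nat \<Rightarrow> real^'n)
    \<Rightarrow> (nat \<Rightarrow> 'n \<Rightarrow> real \<Rightarrow> real) \<Rightarrow> nat \<Rightarrow> 'n \<Rightarrow> real \<Rightarrow> real" where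
  "gradnetC_scalar alpha beta b sig 0 j t = beta 0 $ j * t + b 0 $ j"
| "gradnetC_scalar alpha beta b sig (Suc l) j t = beta (Suc l) $ j * t
     + alpha (Suc l) $ j * sig (Suc l) j (gradnetC_scalar alpha beta b sig l j t) + b (Suc l) $ j"

lemma gradnetC_z_nth:
  "gradnetC_z W alpha beta b sig x l $ j = gradnetC_scalar alpha beta b sig l j ((W *v x) $ j)"
  by (induction l) (simp_all add: hadamard_def elementwise_def)

lemma gradnetC_eq_ridge:
  "gradnetC L W alpha beta b bL sig =
     (\<lambda>x. transpose W *v (\<chi> j. alpha L $ j * sig L j
        (gradnetC_scalar alpha beta b sig (L - 1) j (W $ j \<bullet> x))) + bL)"
  by (simp add: fun_eq_iff gradnetC_def hadamard_def elementwise_def gradnetC_z_nth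
      matrix_vector_mul_component)

lemma continuous_mono_scaled_compose:
  fixes f g :: "real \<Rightarrow> real"
  assumes "continuous_on UNIV f" "mono f" "continuous_on UNIV g" "mono g" "0 \<le> a"
  shows "continuous_on UNIV (\<lambda>t. a * f (g t)) \<and> mono (\<lambda>t. a * f (g t))"
proof
  show "continuous_on UNIV (\<lambda>t. a * f (g t))"
    by (intro continuous_intros continuous_on_compose2[OF assms(1) assms(3)]) auto
  show "mono (\<lambda>t. a * f (g t))"
    using assms(2,4,5) by (auto intro!: monoI mult_left_mono dest: monoD)
qed

lemma gradnetC_scalar_continuous_mono:
  assumes "\<And>k. 1 \<le> k \<Longrightarrow> k \<le> l \<Longrightarrow> continuous_on UNIV (sig k j) \<and> mono (sig k j)"
    and "\<And>k. k \<le> l \<Longrightarrow> 0 \<le> beta k $ j"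
    and "\<And>k. 1 \<le> k \<Longrightarrow> k \<le> l \<Longrightarrow> 0 \<le> alpha k $ j"
  shows "continuous_on UNIV (gradnetC_scalar alpha beta b sig l j)
    \<and> mono (gradnetC_scalar alpha beta b sig l j)"
  using assms
proof (induction l)
  case 0
  then show ?case
    by (auto intro!: continuous_intros monoI mult_left_mono)
next
  case (Suc l)
  let ?g = "gradnetC_scalar alpha beta b sig l j"
  have "continuous_on UNIV ?g" "mono ?g"
    using Suc by auto
  then have "continuous_on UNIV (\<lambda>t. alpha (Suc l) $ j * sig (Suc l) j (?g t))
      \<and> mono (\<lambda>t. alpha (Suc l) $ j * sig (Suc l) j (?g t))"
    using Suc.prems by (intro continuous_mono_scaled_compose) auto
  moreover have "mono (\<lambda>t. beta (Suc l) $ j * t)"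
    using Suc.prems(2)[of "Suc l"] by (auto intro!: monoI mult_left_mono)
  ultimately show ?case
    by (auto intro!: continuous_intros monoI add_mono dest: monoD)
qed

theorem corollary4:
  fixes L :: nat
    and W :: "real^'d^'n"
    and alpha beta b :: "nat \<Rightarrow> real^'n"
    and bL :: "real^'d"
    and sig :: "nat \<Rightarrow> 'n \<Rightarrow> real \<Rightarrow> real"
  assumes "L \<ge> 1"
    and "\<And>l j. 1 \<le> l \<Longrightarrow> l \<le> L \<Longrightarrow> alpha l $ j \<ge> 0"
    and "\<And>l j. l \<le> L - 1 \<Longrightarrow> beta l $ j \<ge> 0"
    and "\<And>l j t. 1 \<le> l \<Longrightarrow> l \<le> L \<Longrightarrow> sig l j differentiable (at t)"
    and "\<And>l j. 1 \<le> l \<Longrightarrow> l \<le> L \<Longrightarrow> mono (sig l j)"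
  shows "mGradNet (gradnetC L W alpha beta b bL sig)"
proof -
  have sig: "continuous_on UNIV (sig l j) \<and> mono (sig l j)" if "1 \<le> l" "l \<le> L" for l j
    using assms(4,5)[OF that]
    by (simp add: continuous_at_imp_continuous_on differentiable_imp_continuous_within)
  let ?z = "gradnetC_scalar alpha beta b sig (L - 1)"
  have "continuous_on UNIV (?z j) \<and> mono (?z j)" for j
    by (rule gradnetC_scalar_continuous_mono) (use sig assms(2,3) in auto)
  then have "continuous_on UNIV (\<lambda>t. alpha L $ j * sig L j (?z j t))
      \<and> mono (\<lambda>t. alpha L $ j * sig L j (?z j t))" for j
    using sig[of L j] assms(1) assms(2)[of L j] by (intro continuous_mono_scaled_compose) auto
  then show ?thesis
    unfolding gradnetC_eq_ridge by (intro mGradNet_ridge) auto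
qed

end
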